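(* Let $B,C\subset\mathbb{R}^d$ be closed convex sets with nonempty interiors and differentiable boundaries, with $B\cap C\neq\emptyset$. Let $x\in\partial B\cap\partial C$ be such that $n_B(x)\neq n_C(x)$, where $n_B(x),n_C(x)$ are the unit outer normals of $B$ and $C$ at $x$. Then there exist a point $a\in\operatorname{int}B\cap\{w:(w-x)\cdot n_C(x)>0\}$ and $\delta,s>0$ such that $$K\Big(x,\tfrac{a-x}{|a-x|},\delta,s\Big)\subset\operatorname{int}B\cup\{x\}\quad\text{and}\quad K\Big(x,-\tfrac{a-x}{|a-x|},\delta,s\Big)\subset\operatorname{int}C\cup\{x\}.$$
   Context: For $x_0,\xi\in\mathbb{R}^d$ with $|\xi|=1$, $\delta\in[0,2]$ and $s>0$: $K(x_0,\xi,\delta)=\{x\in\mathbb{R}^d\setminus\{x_0\}:\frac{x-x_0}{|x-x_0|}\cdot\xi\ge1-\delta\}\cup\{x_0\}$ and $K(x_0,\xi,\delta,s)=K(x_0,\xi,\delta)\cap B(x_0,s)$, where $B(x_0,s)$ is the open ball. *)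

theory Defs
  imports "HOL-Analysis.Analysis"
begin

definition Kcone :: "'a::euclidean_space \<Rightarrow> 'a \<Rightarrow> real \<Rightarrow> 'a set" where
  "Kcone x0 \<xi> \<delta> =
     {x. x \<noteq> x0 \<and> ((x - x0) /\<^sub>R norm (x - x0)) \<bullet> \<xi> \<ge> 1 - \<delta>} \<union> {x0}"

definition Kcone_s :: "'a::euclidean_space \<Rightarrow> 'a \<Rightarrow> real \<Rightarrow> real \<Rightarrow> 'a set" where
  "Kcone_s x0 \<xi> \<delta> s = Kcone x0 \<xi> \<delta> \<inter> ball x0 s"

definition outer_normals :: "'a::euclidean_space set \<Rightarrow> 'a \<Rightarrow> 'a set" where
  "outer_normals B x = {u. norm u = 1 \<and> (\<forall>y\<in>B. (y - x) \<bullet> u \<le> 0)}"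

text \<open>A convex set has differentiable boundary iff the outer unit normal is unique
  at every boundary point (unique supporting hyperplane).\<close>
definition differentiable_boundary :: "'a::euclidean_space set \<Rightarrow> bool" where
  "differentiable_boundary B \<longleftrightarrow> (\<forall>x\<in>frontier B. \<exists>!u. u \<in> outer_normals B x)"

definition outer_normal :: "'a::euclidean_space set \<Rightarrow> 'a \<Rightarrow> 'a" where
  "outer_normal B x = (THE u. u \<in> outer_normals B x)"

end

theory Submission
  imports Defs
begin

text \<open>Put \<open>v = sgn (n\<^sub>C - n\<^sub>B)\<close>, so that \<open>v \<bullet> n\<^sub>B < 0 < v \<bullet> n\<^sub>C\<close>.
  For a convex body \<open>B\<close> whose outer normals at \<open>x\<close> all make an obtuse angle with a unit
  vector \<open>v\<close>, a thin short cone at \<open>x\<close> around \<open>v\<close> lies in \<open>interior B \<union> {x}\<close>: otherwise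
  points \<open>y \<noteq> x\<close> outside the interior, ever closer to \<open>x\<close> and to the ray \<open>x + \<real>\<^sub>+ v\<close>,
  carry supporting hyperplanes whose normals are approximate outer normals of \<open>B\<close> at \<open>x\<close>
  with approximately nonnegative inner product with \<open>v\<close>; by compactness of the unit sphere
  a genuine outer normal \<open>u\<close> with \<open>u \<bullet> v \<ge> 0\<close> results.
  Applying this to \<open>B, v\<close> and to \<open>C, -v\<close> and taking \<open>a\<close> on the common axis gives the claim.\<close>

lemma outer_normals_nonempty:
  fixes B :: "'a::euclidean_space set"
  assumes "convex B" "interior B \<noteq> {}" "y \<notin> interior B"
  shows "outer_normals B y \<noteq> {}"
proof -
  obtain a b where ab: "a \<noteq> 0" "a \<bullet> y \<le> b" "\<forall>w\<in>interior B. b \<le> a \<bullet> w"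
    using separating_hyperplane_sets[of "{y}" "interior B"] assms by auto
  have "B \<subseteq> closure (interior B)"
    using convex_closure_interior[OF assms(1,2)] closure_subset by blast
  also have "\<dots> \<subseteq> {w. b \<le> a \<bullet> w}"
    using ab(3) by (intro closure_minimal) (auto simp: closed_halfspace_ge)
  finally have "0 \<le> a \<bullet> (z - y)" if "z \<in> B" for z
    using that ab(2) by (auto simp: inner_diff_right inner_commute)
  then have "(z - y) \<bullet> (- a /\<^sub>R norm a) \<le> 0" if "z \<in> B" for z
    using that by (simp add: inner_commute)
  moreover have "norm (- a /\<^sub>R norm a) = 1"
    using ab(1) by simp
  ultimately show ?thesis
    unfolding outer_normals_def by blast
qed

lemma outer_normals_eq_outer_normal:
  assumes "differentiable_boundary B" "x \<in> frontier B"
  shows "outer_normals B x = {outer_normal B x}"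
proof -
  have "\<exists>!u. u \<in> outer_normals B x"
    using assms by (auto simp: differentiable_boundary_def)
  then show ?thesis
    unfolding outer_normal_def by (metis (mono_tags) empty_iff insertI1 subsetI subset_singletonD theI')
qed

lemma inner_sgn_diff_unit:
  fixes p q :: "'a::real_inner"
  assumes "norm p = 1" "norm q = 1" "p \<noteq> q"
  shows "sgn (q - p) \<bullet> p < 0" "0 < sgn (q - p) \<bullet> q"
proof -
  have "0 < norm (p - q) ^ 2"
    using assms(3) by simp
  moreover have "p \<bullet> q = 1 - (norm (p - q))\<^sup>2 / 2"
    using dot_norm_neg[of p q] assms(1,2) by simp
  ultimately have pq: "p \<bullet> q < 1"
    by linarith
  have "(q - p) \<bullet> p < 0" "0 < (q - p) \<bullet> q"
    using pq assms(1,2) by (simp_all add: inner_diff_left inner_diff_right inner_commute norm_eq_1)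
  then show "sgn (q - p) \<bullet> p < 0" "0 < sgn (q - p) \<bullet> q"
    using assms(3) by (simp_all add: sgn_div_norm mult_pos_neg)
qed

lemma inner_near_unit_direction:
  fixes u v w :: "'a::real_inner"
  assumes "norm u = 1" "norm v = 1" "norm w = 1" "0 \<le> e" "1 - e\<^sup>2 / 2 \<le> w \<bullet> v"
  shows "u \<bullet> w - e \<le> u \<bullet> v"
proof -
  have "(norm (v - w))\<^sup>2 \<le> e\<^sup>2"
    using dot_norm_neg[of w v] assms(2,3,5) by (simp add: norm_minus_commute)
  then have "norm (v - w) \<le> e"
    using assms(4) power2_le_imp_le by blast
  moreover have "- norm (v - w) \<le> u \<bullet> (v - w)"
    using Cauchy_Schwarz_ineq2[of u "v - w"] assms(1) by simp
  ultimately show ?thesis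
    by (simp add: inner_diff_right)
qed

text \<open>A supporting normal \<open>u\<close> at \<open>y\<close> is off by at most \<open>norm (y - x) < e\<close> in the offset
  of its hyperplane relative to \<open>x\<close>, and \<open>u \<bullet> v\<close> is almost nonnegative because
  \<open>u \<bullet> (y - x) \<ge> 0\<close> (as \<open>x \<in> B\<close>) while \<open>y - x\<close> points almost along \<open>v\<close>.\<close>

lemma approximate_outer_normal_at_cone_point:
  fixes B :: "'a::euclidean_space set"
  assumes "convex B" "interior B \<noteq> {}" "x \<in> B" "norm v = 1" "0 \<le> e"
    and y: "y \<in> Kcone_s x v (e\<^sup>2 / 2) e" "y \<notin> interior B" "y \<noteq> x"
  shows "\<exists>u. norm u = 1 \<and> (\<forall>z\<in>B. (z - x) \<bullet> u \<le> e) \<and> - e \<le> u \<bullet> v"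
proof -
  obtain u where u: "norm u = 1" "\<forall>z\<in>B. (z - y) \<bullet> u \<le> 0"
    using outer_normals_nonempty[OF assms(1,2) y(2)] by (auto simp: outer_normals_def)
  define w where "w = sgn (y - x)"
  have yx: "norm (y - x) < e" "1 - e\<^sup>2 / 2 \<le> w \<bullet> v"
    using y(1,3) by (auto simp: Kcone_s_def Kcone_def w_def sgn_div_norm dist_norm norm_minus_commute)
  have "(y - x) \<bullet> u \<le> norm (y - x)"
    using norm_cauchy_schwarz[of "y - x" u] u(1) by simp
  then have "(z - x) \<bullet> u \<le> e" if "z \<in> B" for z
    using u(2) that yx(1) by (fastforce simp: inner_diff_left)
  moreover have "0 \<le> (y - x) \<bullet> u"
    using u(2) assms(3) by (force simp: inner_diff_left)
  then have "0 \<le> u \<bullet> w"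
    by (simp add: w_def sgn_div_norm inner_commute)
  moreover have "u \<bullet> w - e \<le> u \<bullet> v"
    using inner_near_unit_direction[OF u(1) assms(4) _ assms(5) yx(2)] y(3) by (simp add: w_def norm_sgn)
  ultimately show ?thesis
    using u(1) by (auto simp: inner_commute)
qed

lemma outer_normal_from_approximations:
  fixes x v :: "'a::euclidean_space"
  assumes "\<And>n. \<exists>u. norm u = 1 \<and> (\<forall>z\<in>B. (z - x) \<bullet> u \<le> inverse (Suc n)) \<and>
                      - inverse (Suc n) \<le> u \<bullet> v"
  shows "\<exists>u\<in>outer_normals B x. 0 \<le> u \<bullet> v"
proof -
  define G where "G e = {u. norm u = 1 \<and> (\<forall>z\<in>B. (z - x) \<bullet> u \<le> e) \<and> - e \<le> u \<bullet> v}"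
    for e :: real
  have compact: "compact (G e)" for e
  proof -
    have "G e = sphere 0 1 \<inter> ((\<Inter>z\<in>B. {u. (z - x) \<bullet> u \<le> e}) \<inter> {u. - e \<le> v \<bullet> u})"
      by (auto simp: G_def inner_commute)
    then show ?thesis
      by (simp add: compact_Int_closed closed_Int closed_INT closed_halfspace_le closed_halfspace_ge)
  qed
  have nonempty: "G (inverse (Suc n)) \<noteq> {}" for n
    using assms by (auto simp: G_def)
  have mono: "G (inverse (Suc n)) \<subseteq> G (inverse (Suc m))" if "m \<le> n" for m n
  proof -
    have "inverse (real (Suc n)) \<le> inverse (Suc m)"
      using that by (simp add: le_imp_inverse_le)
    then show ?thesis
      unfolding G_def by (smt (verit) Collect_mono)
  qed
  obtain u where u: "\<And>n. u \<in> G (inverse (Suc n))"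
    using compact_nest[of "\<lambda>n. G (inverse (Suc n))", OF compact nonempty mono] by blast
  have nonpos: "a \<le> 0" if "\<And>n. a \<le> inverse (Suc n)" for a :: real
    using that by (metis not_le reals_Archimedean)
  have "(z - x) \<bullet> u \<le> 0" if "z \<in> B" for z
    using u that by (intro nonpos) (auto simp: G_def)
  moreover have "- (u \<bullet> v) \<le> inverse (Suc n)" for n
    using u[of n] unfolding G_def by (simp add: minus_le_iff)
  then have "0 \<le> u \<bullet> v"
    using nonpos by fastforce
  ultimately show ?thesis
    using u[of 0] by (auto simp: G_def outer_normals_def)
qed

lemma Kcone_s_subset_interior:
  fixes B :: "'a::euclidean_space set"
  assumes "convex B" "interior B \<noteq> {}" "x \<in> B" "norm v = 1"
    and obtuse: "\<forall>u\<in>outer_normals B x. u \<bullet> v < 0"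
  shows "\<exists>\<delta> s. 0 < \<delta> \<and> \<delta> \<le> 2 \<and> 0 < s \<and> Kcone_s x v \<delta> s \<subseteq> interior B \<union> {x}"
proof (rule ccontr)
  assume no_cone: "\<not> ?thesis"
  have "\<exists>u. norm u = 1 \<and> (\<forall>z\<in>B. (z - x) \<bullet> u \<le> inverse (Suc n)) \<and> - inverse (Suc n) \<le> u \<bullet> v"
    for n :: nat
  proof -
    define e where "e = inverse (real (Suc n))"
    have "0 < e" "e \<le> 1"
      by (simp_all add: e_def inverse_le_1_iff)
    then have "0 < e\<^sup>2 / 2" "e\<^sup>2 / 2 \<le> 2"
      using power_le_one[of e 2] by simp_all
    then have "\<not> Kcone_s x v (e\<^sup>2 / 2) e \<subseteq> interior B \<union> {x}"
      using no_cone \<open>0 < e\<close> by blast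
    then obtain y where "y \<in> Kcone_s x v (e\<^sup>2 / 2) e" "y \<notin> interior B" "y \<noteq> x"
      by blast
    then show ?thesis
      using approximate_outer_normal_at_cone_point[OF assms(1-4)] \<open>0 < e\<close> by (simp add: e_def)
  qed
  then obtain u where "u \<in> outer_normals B x" "0 \<le> u \<bullet> v"
    using outer_normal_from_approximations[of B x v] by blast
  then show False
    using obtuse by fastforce
qed

lemma Kcone_s_mono:
  assumes "\<delta> \<le> \<delta>'" "s \<le> s'"
  shows "Kcone_s x v \<delta> s \<subseteq> Kcone_s x v \<delta>' s'"
  using assms by (auto simp: Kcone_s_def Kcone_def)

lemma Kcone_s_axis:
  assumes "norm v = 1" "0 < t" "t < s" "0 \<le> \<delta>"
  shows "x + t *\<^sub>R v \<in> Kcone_s x v \<delta> s"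
proof -
  have "v \<bullet> v = 1"
    using assms(1) norm_eq_1 by blast
  then show ?thesis
    using assms by (auto simp: Kcone_s_def Kcone_def dist_norm)
qed

lemma Kcone_s_opposite_subset_interiors:
  fixes B C :: "'a::euclidean_space set"
  assumes "convex B" "interior B \<noteq> {}" "x \<in> B" "\<forall>u\<in>outer_normals B x. u \<bullet> v < 0"
    and "convex C" "interior C \<noteq> {}" "x \<in> C" "\<forall>u\<in>outer_normals C x. 0 < u \<bullet> v"
    and "norm v = 1"
  shows "\<exists>\<delta> s. 0 < \<delta> \<and> \<delta> \<le> 2 \<and> 0 < s \<and>
           Kcone_s x v \<delta> s \<subseteq> interior B \<union> {x} \<and> Kcone_s x (- v) \<delta> s \<subseteq> interior C \<union> {x}"
proof -
  obtain \<delta>1 s1 where K1: "0 < \<delta>1" "\<delta>1 \<le> 2" "0 < s1" "Kcone_s x v \<delta>1 s1 \<subseteq> interior B \<union> {x}"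
    using Kcone_s_subset_interior[OF assms(1-3,9,4)] by blast
  obtain \<delta>2 s2 where K2: "0 < \<delta>2" "\<delta>2 \<le> 2" "0 < s2" "Kcone_s x (- v) \<delta>2 s2 \<subseteq> interior C \<union> {x}"
    using Kcone_s_subset_interior[OF assms(5-7), of "- v"] assms(8,9) by auto
  have "Kcone_s x v (min \<delta>1 \<delta>2) (min s1 s2) \<subseteq> interior B \<union> {x}"
    using Kcone_s_mono[of "min \<delta>1 \<delta>2" \<delta>1 "min s1 s2" s1] K1(4) by auto
  moreover have "Kcone_s x (- v) (min \<delta>1 \<delta>2) (min s1 s2) \<subseteq> interior C \<union> {x}"
    using Kcone_s_mono[of "min \<delta>1 \<delta>2" \<delta>2 "min s1 s2" s2] K2(4) by auto
  ultimately show ?thesis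
    using K1 K2 by (intro exI[of _ "min \<delta>1 \<delta>2"] exI[of _ "min s1 s2"]) auto
qed

theorem lemma2p16:
  fixes B C :: "'a::euclidean_space set" and x :: 'a
  assumes "closed B" "convex B" "interior B \<noteq> {}" "differentiable_boundary B"
    and "closed C" "convex C" "interior C \<noteq> {}" "differentiable_boundary C"
    and "B \<inter> C \<noteq> {}"
    and "x \<in> frontier B" "x \<in> frontier C"
    and "outer_normal B x \<noteq> outer_normal C x"
  shows "\<exists>a \<delta> s. a \<in> interior B \<and> (a - x) \<bullet> outer_normal C x > 0 \<and>
           0 < \<delta> \<and> \<delta> \<le> 2 \<and> 0 < s \<and>
           Kcone_s x ((a - x) /\<^sub>R norm (a - x)) \<delta> s \<subseteq> interior B \<union> {x} \<and>
           Kcone_s x (- ((a - x) /\<^sub>R norm (a - x))) \<delta> s \<subseteq> interior C \<union> {x}"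
proof -
  define nB nC where "nB = outer_normal B x" and "nC = outer_normal C x"
  have "outer_normals B x = {nB}" "outer_normals C x = {nC}"
    using outer_normals_eq_outer_normal assms(4,8,10,11) by (auto simp: nB_def nC_def)
  moreover define v where "v = sgn (nC - nB)"
  ultimately have v: "norm v = 1" "v \<bullet> nB < 0" "0 < v \<bullet> nC"
    and normals: "\<forall>u\<in>outer_normals B x. u \<bullet> v < 0" "\<forall>u\<in>outer_normals C x. 0 < u \<bullet> v"
    using inner_sgn_diff_unit[of nB nC] assms(12)
    by (auto simp: v_def norm_sgn outer_normals_def nB_def nC_def inner_commute)
  have "x \<in> B" "x \<in> C"
    using assms(1,5,10,11) frontier_subset_closed by blast+
  then obtain \<delta> s where K: "0 < \<delta>" "\<delta> \<le> 2" "0 < s"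
      "Kcone_s x v \<delta> s \<subseteq> interior B \<union> {x}" "Kcone_s x (- v) \<delta> s \<subseteq> interior C \<union> {x}"
    using Kcone_s_opposite_subset_interiors[OF assms(2,3) _ normals(1) assms(6,7) _ normals(2) v(1)]
    by blast
  define a where "a = x + (s / 2) *\<^sub>R v"
  have "a \<in> interior B"
    using K(1,3,4) Kcone_s_axis[OF v(1), of "s / 2" s \<delta> x] v(1) by (auto simp: a_def)
  moreover have "(a - x) /\<^sub>R norm (a - x) = v" "0 < (a - x) \<bullet> nC"
    using K(3) v by (simp_all add: a_def)
  ultimately show ?thesis
    using K unfolding nC_def by metis
qed

end
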